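(* Let $\Xi>1$, let $\rho:[1,\Xi]\to\mathbb{R}$ be continuous, let $\tilde\lambda\in\mathbb{C}$, and let $c>-1$ be a real number satisfying \[ 1=\sqrt{1+c}+\frac12\int_1^\Xi dT\,\frac{\rho(T)}{(\sqrt{1+c}+\sqrt{T+c})\sqrt{T+c}}. \] For $X\geq 1$ put $W(X):=\sqrt{X+c}+\frac12\int_1^\Xi dT\,\frac{\rho(T)}{(\sqrt{X+c}+\sqrt{T+c})\sqrt{T+c}}$, and for $X,Y\geq 1$ put \[ G(X|Y):=\frac{4\tilde\lambda^2}{\sqrt{X+c}\,\sqrt{Y+c}\,(\sqrt{X+c}+\sqrt{Y+c})^2},\qquad G(X,Y,Y):=8\tilde\lambda\frac{\partial}{\partial Y}\frac{W(X)-W(Y)}{X-Y}. \] Then $G(X|Y)$ solves the integral equation for the $(1{+}1)$-point function: for all $X,Y\in[1,\Xi]$ with $X\neq Y$, \[ W(X)\,G(X|Y)=-\tilde\lambda\,G(X,Y,Y)-\frac12\int_1^\Xi dT\,\rho(T)\,\frac{G(X|Y)-G(T|Y)}{X-T}. \]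
   Context: This is the Schwinger–Dyson equation for the large-matrix limit of the connected correlation function with two boundary components of length one in the $\Phi^3$ matrix model (two-dimensional case, with normalisation parameters $Z=1$, $\nu=0$); $G(X,Y,Y)$ is the corresponding 3-point function. Square roots are positive; the integrand at $T=X$ is understood by continuous extension. *)

theory Defs
  imports "HOL-Analysis.Analysis"
begin

definition Wfun :: "real \<Rightarrow> real \<Rightarrow> (real \<Rightarrow> real) \<Rightarrow> real \<Rightarrow> real" where
  "Wfun Xi c rho X = sqrt (X + c) + 1/2 * integral {1..Xi}
      (\<lambda>T. rho T / ((sqrt (X + c) + sqrt (T + c)) * sqrt (T + c)))"

definition G11 :: "complex \<Rightarrow> real \<Rightarrow> real \<Rightarrow> real \<Rightarrow> complex" where
  "G11 lam c X Y = 4 * lam ^ 2 /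
      complex_of_real (sqrt (X + c) * sqrt (Y + c) * (sqrt (X + c) + sqrt (Y + c)) ^ 2)"

definition G3 :: "real \<Rightarrow> real \<Rightarrow> (real \<Rightarrow> real) \<Rightarrow> complex \<Rightarrow> real \<Rightarrow> real \<Rightarrow> complex" where
  "G3 Xi c rho lam X Y = 8 * lam *
      complex_of_real (deriv (\<lambda>y. (Wfun Xi c rho X - Wfun Xi c rho y) / (X - y)) Y)"

end

theory Submission
  imports Defs
begin

text \<open>With \<open>s = \<surd>(X+c)\<close>, \<open>t = \<surd>(Y+c)\<close>, \<open>u = \<surd>(T+c)\<close> and weight \<open>w = \<rho>/u\<close>,
  both \<open>W\<close> and (by differentiation under the integral sign) \<open>W'\<close> are expressed through
  the three integrals of \<open>w/(s+u)\<close>, \<open>w/(t+u)\<close> and \<open>w/(t+u)\<^sup>2\<close>. Since \<open>X - T = s\<^sup>2 - u\<^sup>2\<close>,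
  a partial-fraction decomposition in \<open>u\<close> writes the difference quotient
  \<open>(G(X|Y) - G(T|Y))/(X - T)\<close> as a combination of the same three integrands, so the
  equation collapses to a rational identity in \<open>s\<close>, \<open>t\<close> and three free reals.\<close>

lemma integral_divide_shift_has_real_derivative:
  fixes w u :: "real \<Rightarrow> real"
  assumes w: "continuous_on {a..b} w" and u: "continuous_on {a..b} u"
    and u_nonneg: "\<And>T. T \<in> {a..b} \<Longrightarrow> u T \<ge> 0" and "s > 0"
  shows "((\<lambda>s. integral {a..b} (\<lambda>T. w T / (s + u T))) has_real_derivative
           - integral {a..b} (\<lambda>T. w T / (s + u T)^2)) (at s)"
proof -
  let ?U = "{0<..} :: real set"
  have pos: "x + u T > 0" if "x \<in> ?U" "T \<in> {a..b}" for x T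
    using that u_nonneg[of T] by simp
  have "((\<lambda>x. integral (cbox a b) (\<lambda>T. w T / (x + u T))) has_field_derivative
          integral (cbox a b) (\<lambda>T. - (w T / (s + u T)^2))) (at s within ?U)"
  proof (rule leibniz_rule_field_derivative)
    fix x T assume "x \<in> ?U" "T \<in> cbox a b"
    then have "x + u T \<noteq> 0" using pos by fastforce
    then show "((\<lambda>x. w T / (x + u T)) has_field_derivative - (w T / (x + u T)^2)) (at x within ?U)"
      by (auto intro!: derivative_eq_intros simp: power2_eq_square)
  next
    fix x assume "x \<in> ?U"
    then have "continuous_on {a..b} (\<lambda>T. w T / (x + u T))"
      using pos by (fastforce intro!: continuous_intros w u)
    then show "(\<lambda>T. w T / (x + u T)) integrable_on cbox a b"
      by (simp add: integrable_continuous_interval)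
  next
    have "continuous_on (?U \<times> {a..b}) (\<lambda>z. - (w (snd z) / (fst z + u (snd z))^2))"
      using pos
      by (fastforce intro!: continuous_intros continuous_on_compose2[OF w] continuous_on_compose2[OF u])
    then show "continuous_on (?U \<times> cbox a b) (\<lambda>(x, T). - (w T / (x + u T)^2))"
      by (simp add: split_beta)
  qed (use \<open>s > 0\<close> in auto)
  moreover have "at s within ?U = at s"
    using \<open>s > 0\<close> by (intro at_within_open) auto
  ultimately show ?thesis
    by (simp add: box_real)
qed

lemma Wfun_eq_integral_divide_shift:
  "Wfun Xi c rho y = sqrt (y + c) +
     1/2 * integral {1..Xi} (\<lambda>T. rho T / sqrt (T + c) / (sqrt (y + c) + sqrt (T + c)))"
  unfolding Wfun_def by (simp add: mult.commute)

lemma Wfun_has_real_derivative: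
  assumes rho: "continuous_on {1..Xi} rho" and "c > -1" and "y + c > 0"
  shows "(Wfun Xi c rho has_real_derivative
           (1 - 1/2 * integral {1..Xi} (\<lambda>T. rho T / sqrt (T + c) / (sqrt (y + c) + sqrt (T + c))^2))
             / (2 * sqrt (y + c))) (at y)"
proof -
  have "continuous_on {1..Xi} (\<lambda>T. rho T / sqrt (T + c))"
    using \<open>c > -1\<close> by (fastforce intro!: continuous_intros rho)
  then have J: "((\<lambda>s. integral {1..Xi} (\<lambda>T. rho T / sqrt (T + c) / (s + sqrt (T + c))))
      has_real_derivative - integral {1..Xi} (\<lambda>T. rho T / sqrt (T + c) / (sqrt (y + c) + sqrt (T + c))^2))
      (at (sqrt (y + c)))"
    using \<open>y + c > 0\<close> \<open>c > -1\<close>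
    by (intro integral_divide_shift_has_real_derivative) (auto intro!: continuous_intros)
  have "((\<lambda>y. sqrt (y + c)) has_real_derivative 1 / (2 * sqrt (y + c))) (at y)"
    using \<open>y + c > 0\<close> by (auto intro!: derivative_eq_intros simp: divide_simps)
  from DERIV_add[OF this DERIV_cmult[OF DERIV_chain2[OF J this], of "1/2"]]
  have "(Wfun Xi c rho has_real_derivative 1 / (2 * sqrt (y + c)) + 1/2 *
      (- integral {1..Xi} (\<lambda>T. rho T / sqrt (T + c) / (sqrt (y + c) + sqrt (T + c))^2)
       * (1 / (2 * sqrt (y + c))))) (at y)"
    unfolding Wfun_eq_integral_divide_shift[abs_def] by simp
  then show ?thesis
    by (rule DERIV_cong) (use \<open>y + c > 0\<close> in \<open>simp add: field_simps\<close>)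
qed

lemma difference_quotient_has_real_derivative:
  fixes f :: "real \<Rightarrow> real"
  assumes "(f has_real_derivative f') (at y)" and "x \<noteq> y"
  shows "((\<lambda>y. (f x - f y) / (x - y)) has_real_derivative
           (f x - f y - f' * (x - y)) / (x - y)^2) (at y)"
  using assms by (auto intro!: derivative_eq_intros simp: power2_eq_square field_simps)

lemma kernel_difference_quotient_partial_fractions:
  fixes s t u :: real
  assumes "s > 0" "t > 0" "u > 0" "s \<noteq> t" "s \<noteq> u"
  shows "(1 / (s * t * (s + t)^2) - 1 / (u * t * (u + t)^2)) / (s^2 - u^2) =
           - (s^2 + t^2) / (s * t * (t^2 - s^2)^2) / (u * (s + u))
           + 2 / (t^2 - s^2)^2 / (u * (t + u))
           + 1 / (t * (t^2 - s^2)) / (u * (t + u)^2)"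
proof -
  have "t^2 - s^2 \<noteq> 0" "s^2 - u^2 \<noteq> 0"
    using assms by (auto simp: power2_eq_iff)
  with assms show ?thesis
    by (simp add: divide_simps) (simp add: power2_eq_square algebra_simps)
qed

lemma schwinger_dyson_algebraic_identity:
  fixes s t I1 I2 I3 :: real
  assumes "s > 0" "t > 0" "s \<noteq> t"
  shows "(s + 1/2 * I1) * (1 / (s * t * (s + t)^2)) =
           -2 * ((s + 1/2 * I1 - (t + 1/2 * I2) - (1 - 1/2 * I3) / (2 * t) * (s^2 - t^2)) / (s^2 - t^2)^2)
           - 1/2 * (- (s^2 + t^2) / (s * t * (t^2 - s^2)^2) * I1
                    + 2 / (t^2 - s^2)^2 * I2 + 1 / (t * (t^2 - s^2)) * I3)"
proof -
  have "t^2 - s^2 \<noteq> 0" "s^2 - t^2 \<noteq> 0"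
    using assms by (auto simp: power2_eq_iff)
  with assms show ?thesis
    by (simp add: divide_simps) (simp add: power2_eq_square algebra_simps)
qed

definition G11_kernel :: "real \<Rightarrow> real \<Rightarrow> real \<Rightarrow> real" where
  "G11_kernel c X Y = 1 / (sqrt (X + c) * sqrt (Y + c) * (sqrt (X + c) + sqrt (Y + c))^2)"

lemma G11_eq_G11_kernel: "G11 lam c X Y = 4 * lam^2 * complex_of_real (G11_kernel c X Y)"
  unfolding G11_def G11_kernel_def by simp

lemma G11_kernel_difference_quotient_has_integral:
  assumes rho: "continuous_on {1..Xi} rho" and "c > -1"
    and "X + c > 0" and "Y + c > 0" and "X \<noteq> Y"
  defines "s \<equiv> sqrt (X + c)" and "t \<equiv> sqrt (Y + c)"
  shows "((\<lambda>T. rho T * (G11_kernel c X Y - G11_kernel c T Y) / (X - T)) has_integral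
           - (s^2 + t^2) / (s * t * (t^2 - s^2)^2)
               * integral {1..Xi} (\<lambda>T. rho T / sqrt (T + c) / (s + sqrt (T + c)))
           + 2 / (t^2 - s^2)^2
               * integral {1..Xi} (\<lambda>T. rho T / sqrt (T + c) / (t + sqrt (T + c)))
           + 1 / (t * (t^2 - s^2))
               * integral {1..Xi} (\<lambda>T. rho T / sqrt (T + c) / (t + sqrt (T + c))^2)) {1..Xi}"
    (is "(_ has_integral ?a * integral _ ?f1 + ?b * integral _ ?f2 + ?d * integral _ ?f3) _")
proof -
  have u_pos: "sqrt (T + c) > 0" if "T \<in> {1..Xi}" for T
    using that \<open>c > -1\<close> by simp
  have st_pos: "s > 0" "t > 0"
    using \<open>X + c > 0\<close> \<open>Y + c > 0\<close> by (simp_all add: s_def t_def)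
  have "s \<noteq> t"
    using \<open>X + c > 0\<close> \<open>Y + c > 0\<close> \<open>X \<noteq> Y\<close> by (simp add: s_def t_def)
  have integrable: "(\<lambda>T. rho T / sqrt (T + c) / (r + sqrt (T + c)) ^ n) integrable_on {1..Xi}"
    if "r > 0" for r n
    using that u_pos
    by (intro integrable_continuous_interval)
       (fastforce intro!: continuous_intros rho simp: add_pos_pos)
  have "((\<lambda>T. ?a * ?f1 T + ?b * ?f2 T + ?d * ?f3 T) has_integral
          ?a * integral {1..Xi} ?f1 + ?b * integral {1..Xi} ?f2 + ?d * integral {1..Xi} ?f3) {1..Xi}"
    using integrable[of s 1] integrable[of t 1] integrable[of t 2] st_pos
    by (intro has_integral_add has_integral_mult_right integrable_integral) simp_all
  \<comment> \<open>At \<open>T = X\<close> the quotient takes the junk value \<open>_/0 = 0\<close>; one point is negligible.\<close>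
  then show ?thesis
  proof (rule has_integral_spike[OF negligible_sing, rotated])
    fix T assume T: "T \<in> {1..Xi} - {X}"
    define u where "u = sqrt (T + c)"
    have "u > 0"
      using T u_pos by (simp add: u_def)
    have "s \<noteq> u" and XT: "X - T = s^2 - u^2"
      using T \<open>X + c > 0\<close> \<open>c > -1\<close> by (auto simp: s_def u_def)
    have "rho T * (G11_kernel c X Y - G11_kernel c T Y) / (X - T)
        = rho T * ((1 / (s * t * (s + t)^2) - 1 / (u * t * (u + t)^2)) / (s^2 - u^2))"
      unfolding G11_kernel_def XT by (simp add: s_def t_def u_def mult.commute)
    also have "\<dots> = ?a * ?f1 T + ?b * ?f2 T + ?d * ?f3 T"
      unfolding kernel_difference_quotient_partial_fractions[OF st_pos \<open>u > 0\<close> \<open>s \<noteq> t\<close> \<open>s \<noteq> u\<close>]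
      by (simp add: u_def algebra_simps)
    finally show "rho T * (G11_kernel c X Y - G11_kernel c T Y) / (X - T)
        = ?a * ?f1 T + ?b * ?f2 T + ?d * ?f3 T" .
  qed
qed

lemma Wfun_G11_kernel_schwinger_dyson:
  assumes "continuous_on {1..Xi} rho" and "c > -1"
    and "X + c > 0" and "Y + c > 0" and "X \<noteq> Y"
  shows "Wfun Xi c rho X * G11_kernel c X Y =
           -2 * deriv (\<lambda>y. (Wfun Xi c rho X - Wfun Xi c rho y) / (X - y)) Y
           - 1/2 * integral {1..Xi} (\<lambda>T. rho T * (G11_kernel c X Y - G11_kernel c T Y) / (X - T))"
proof -
  define s t where "s = sqrt (X + c)" and "t = sqrt (Y + c)"
  have "s > 0" "t > 0" and X_Y: "X - Y = s^2 - t^2"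
    using \<open>X + c > 0\<close> \<open>Y + c > 0\<close> by (simp_all add: s_def t_def)
  have "s \<noteq> t"
    using \<open>X + c > 0\<close> \<open>Y + c > 0\<close> \<open>X \<noteq> Y\<close> by (simp add: s_def t_def)
  define I1 I2 I3 where
    "I1 = integral {1..Xi} (\<lambda>T. rho T / sqrt (T + c) / (s + sqrt (T + c)))" and
    "I2 = integral {1..Xi} (\<lambda>T. rho T / sqrt (T + c) / (t + sqrt (T + c)))" and
    "I3 = integral {1..Xi} (\<lambda>T. rho T / sqrt (T + c) / (t + sqrt (T + c))^2)"
  have W_X: "Wfun Xi c rho X = s + 1/2 * I1" and W_Y: "Wfun Xi c rho Y = t + 1/2 * I2"
    by (simp_all add: Wfun_eq_integral_divide_shift s_def t_def I1_def I2_def)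
  have "deriv (\<lambda>y. (Wfun Xi c rho X - Wfun Xi c rho y) / (X - y)) Y =
      (Wfun Xi c rho X - Wfun Xi c rho Y - (1 - 1/2 * I3) / (2 * t) * (X - Y)) / (X - Y)^2"
    unfolding t_def I3_def
    by (intro DERIV_imp_deriv difference_quotient_has_real_derivative Wfun_has_real_derivative)
       (use assms in auto)
  also have "\<dots> = (s + 1/2 * I1 - (t + 1/2 * I2) - (1 - 1/2 * I3) / (2 * t) * (s^2 - t^2)) / (s^2 - t^2)^2"
    unfolding W_X W_Y X_Y ..
  finally have deriv_eq: "deriv (\<lambda>y. (Wfun Xi c rho X - Wfun Xi c rho y) / (X - y)) Y = \<dots>" .
  have integral_eq: "integral {1..Xi} (\<lambda>T. rho T * (G11_kernel c X Y - G11_kernel c T Y) / (X - T)) =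
      - (s^2 + t^2) / (s * t * (t^2 - s^2)^2) * I1 + 2 / (t^2 - s^2)^2 * I2 + 1 / (t * (t^2 - s^2)) * I3"
    unfolding I1_def I2_def I3_def s_def t_def
    by (rule integral_unique[OF G11_kernel_difference_quotient_has_integral[OF assms]])
  have "Wfun Xi c rho X * G11_kernel c X Y = (s + 1/2 * I1) * (1 / (s * t * (s + t)^2))"
    by (simp add: W_X G11_kernel_def s_def t_def)
  also have "\<dots> = -2 * ((s + 1/2 * I1 - (t + 1/2 * I2) - (1 - 1/2 * I3) / (2 * t) * (s^2 - t^2)) / (s^2 - t^2)^2)
      - 1/2 * (- (s^2 + t^2) / (s * t * (t^2 - s^2)^2) * I1 + 2 / (t^2 - s^2)^2 * I2
               + 1 / (t * (t^2 - s^2)) * I3)"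
    by (rule schwinger_dyson_algebraic_identity[OF \<open>s > 0\<close> \<open>t > 0\<close> \<open>s \<noteq> t\<close>])
  finally show ?thesis
    unfolding deriv_eq integral_eq .
qed

theorem proposition6:
  fixes Xi c :: real and rho :: "real \<Rightarrow> real" and lam :: complex and X Y :: real
  assumes "Xi > 1"
    and "continuous_on {1..Xi} rho"
    and "c > -1"
    and "1 = sqrt (1 + c) + 1/2 * integral {1..Xi}
           (\<lambda>T. rho T / ((sqrt (1 + c) + sqrt (T + c)) * sqrt (T + c)))"
    and "X \<in> {1..Xi}" and "Y \<in> {1..Xi}" and "X \<noteq> Y"
  shows "complex_of_real (Wfun Xi c rho X) * G11 lam c X Y =
           - lam * G3 Xi c rho lam X Y
           - 1/2 * integral {1..Xi}
               (\<lambda>T. complex_of_real (rho T) * (G11 lam c X Y - G11 lam c T Y)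
                     / complex_of_real (X - T))"
proof -
  let ?q = "\<lambda>T. rho T * (G11_kernel c X Y - G11_kernel c T Y) / (X - T)"
  have "X + c > 0" "Y + c > 0"
    using assms by auto
  note real_form = Wfun_G11_kernel_schwinger_dyson[OF assms(2,3) this assms(7)]
  have integrand: "complex_of_real (rho T) * (G11 lam c X Y - G11 lam c T Y) / complex_of_real (X - T)
      = 4 * lam^2 * complex_of_real (?q T)" for T
    unfolding G11_eq_G11_kernel by (simp add: divide_inverse algebra_simps)
  have "((\<lambda>T. 4 * lam^2 * complex_of_real (?q T)) has_integral
          4 * lam^2 * complex_of_real (integral {1..Xi} ?q)) {1..Xi}"
    using G11_kernel_difference_quotient_has_integral[OF assms(2,3) \<open>X + c > 0\<close> \<open>Y + c > 0\<close> assms(7)]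
    by (intro has_integral_mult_right has_integral_of_real integrable_integral has_integral_integrable)
  then have integral_eq: "integral {1..Xi} (\<lambda>T. complex_of_real (rho T) * (G11 lam c X Y - G11 lam c T Y)
      / complex_of_real (X - T)) = 4 * lam^2 * complex_of_real (integral {1..Xi} ?q)"
    unfolding integrand by (rule integral_unique)
  have "complex_of_real (Wfun Xi c rho X) * G11 lam c X Y = 4 * lam^2 * complex_of_real
      (-2 * deriv (\<lambda>y. (Wfun Xi c rho X - Wfun Xi c rho y) / (X - y)) Y - 1/2 * integral {1..Xi} ?q)"
    unfolding G11_eq_G11_kernel real_form[symmetric] by simp
  then show ?thesis
    unfolding G3_def integral_eq by (simp add: algebra_simps power2_eq_square)
qed

end
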